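(* For every $n\in\mathbb{N}$, $t\in(0,1)$, $\varepsilon\in(0,1)$ and $\ell\ge1$ there exists $\mu=\mu_{n,t,\varepsilon,\ell}>0$ such that for all $\gamma\ge0$, $\lambda\ge1$ the following holds: if $A,B\subset\mathbb{R}^n$ are $(\gamma,\ell,\lambda,\mu)$ conelike with associated convex sets $C_A,C_B$, then $$tA+(1-t)B\supset t(1-\varepsilon/4)C_A+(1-t)C_B.$$
   Context: Scalar multiples of sets are dilations about the origin, $X+Y$ is the Minkowski sum, $o$ the origin, $B(p,r)$ the open Euclidean ball, $|\cdot|$ Lebesgue measure. A convex set $C\subset\mathbb{R}^n$ is a cone if there are a hyperplane $H$ not containing the origin and a bounded convex set $P\subset H$ with $C=\bigcup_{s\ge0}sP$. Sets $A,B\subset\mathbb{R}^n$ are called $(\gamma,\ell,\lambda,\mu)$ conelike if there exist convex sets $C_A\supset A$, $C_B\supset B$ with $|C_A|=|C_B|=(1+\gamma)|A|=(1+\gamma)|B|$, a convex set $K$, and a set $S''$ obtained by intersecting a cone with a half-space, such that: (1) $B(o,1/\ell)\subset C_A,C_B\subset B(o,\ell)$; (2) for some $z\in\mathbb{R}^n$, each of $A-z$, $C_A-z$, $B-z$, $C_B-z$ contains $S''$ and is contained in $\lambda S''$; (3) for some $x,y\in\mathbb{R}^n$, each of $A+x$, $C_A+x$, $B+y$, $C_B+y$ contains $K$ and is contained in $(1+\mu)K$. *)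

theory Defs
  imports "HOL-Analysis.Analysis"
begin

definition msum :: "'a::real_vector set \<Rightarrow> 'a set \<Rightarrow> 'a set" where
  "msum X Y = {x + y | x y. x \<in> X \<and> y \<in> Y}"

definition dil :: "real \<Rightarrow> 'a::real_vector set \<Rightarrow> 'a set" where
  "dil s X = (\<lambda>x. s *\<^sub>R x) ` X"

definition transl :: "'a::real_vector set \<Rightarrow> 'a \<Rightarrow> 'a set" where
  "transl X v = (\<lambda>x. x + v) ` X"

definition hyperplane_off0 :: "'a::euclidean_space set \<Rightarrow> bool" where
  "hyperplane_off0 H \<longleftrightarrow> (\<exists>a b. a \<noteq> 0 \<and> H = {x. a \<bullet> x = b}) \<and> 0 \<notin> H"

definition is_cone :: "'a::euclidean_space set \<Rightarrow> bool" where
  "is_cone C \<longleftrightarrow> convex C \<and>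
     (\<exists>H P. hyperplane_off0 H \<and> P \<subseteq> H \<and> bounded P \<and> convex P \<and>
            C = (\<Union>s\<in>{0..}. dil s P))"

definition halfspace :: "'a::euclidean_space set \<Rightarrow> bool" where
  "halfspace S \<longleftrightarrow> (\<exists>a b. a \<noteq> 0 \<and> S = {x. a \<bullet> x \<le> b})"

definition cone_cut :: "'a::euclidean_space set \<Rightarrow> bool" where
  "cone_cut S \<longleftrightarrow> (\<exists>C Hs. is_cone C \<and> halfspace Hs \<and> S = C \<inter> Hs)"

definition conelike_with ::
  "real \<Rightarrow> real \<Rightarrow> real \<Rightarrow> real \<Rightarrow> 'a::euclidean_space set \<Rightarrow> 'a set \<Rightarrow> 'a set \<Rightarrow> 'a set \<Rightarrow> bool" where
  "conelike_with \<gamma> l lam \<mu> A B CA CB \<longleftrightarrow>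
     convex CA \<and> convex CB \<and> A \<subseteq> CA \<and> B \<subseteq> CB \<and>
     measure lebesgue CA = (1 + \<gamma>) * measure lebesgue A \<and>
     measure lebesgue CB = (1 + \<gamma>) * measure lebesgue B \<and>
     measure lebesgue A = measure lebesgue B \<and>
     ball 0 (1 / l) \<subseteq> CA \<and> ball 0 (1 / l) \<subseteq> CB \<and>
     CA \<subseteq> ball 0 l \<and> CB \<subseteq> ball 0 l \<and>
     (\<exists>S z. cone_cut S \<and>
        (\<forall>X\<in>{A, CA, B, CB}. S \<subseteq> transl X (- z) \<and> transl X (- z) \<subseteq> dil lam S)) \<and>
     (\<exists>K x y. convex K \<and>
        (\<forall>X\<in>{transl A x, transl CA x, transl B y, transl CB y}.
            K \<subseteq> X \<and> X \<subseteq> dil (1 + \<mu>) K))"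

definition conelike ::
  "real \<Rightarrow> real \<Rightarrow> real \<Rightarrow> real \<Rightarrow> 'a::euclidean_space set \<Rightarrow> 'a set \<Rightarrow> bool" where
  "conelike \<gamma> l lam \<mu> A B \<longleftrightarrow> (\<exists>CA CB. conelike_with \<gamma> l lam \<mu> A B CA CB)"

end

theory Submission
  imports Defs
begin

text \<open>Only the sandwich condition (3) and the inner ball of \<open>C\<^sub>A\<close> are needed. Translate so
  that \<open>K \<subseteq> A + x, B + y\<close> and \<open>C\<^sub>A + x, C\<^sub>B + y \<subseteq> (1 + \<mu>) K\<close>. For \<open>a \<in> C\<^sub>A\<close>, \<open>b \<in> C\<^sub>B\<close> the points
  \<open>(a + x)/(1 + \<mu>)\<close>, \<open>(b + y)/(1 + \<mu>)\<close> lie in \<open>K\<close>, and so does a convex combination \<open>m\<close> of them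
  with \<open>(1 + \<mu>)(1 - \<delta>) m = (t - \<delta>)(a + x) + (1 - t)(b + y)\<close>. Since \<open>K\<close> contains a ball of radius
  about \<open>1/\<ell>\<close> around \<open>x/(1 + \<mu>)\<close> and is bounded, the point \<open>k = (1 + \<mu>)(1 - \<delta>) m + \<delta> x\<close> is a
  convex combination of \<open>m\<close> and a point of that ball once \<open>\<mu>\<close> is small compared with \<open>\<delta>\<close>, so
  \<open>k \<in> K\<close>; then \<open>(t - \<delta>) a + (1 - t) b = t (k - x) + (1 - t)(k - y) \<in> t A + (1 - t) B\<close>.
  With \<open>\<delta> = t \<epsilon>/4\<close> this is the theorem.\<close>

lemma mem_dil_divide:
  assumes "z \<in> dil d K" "d \<noteq> 0"
  shows "z /\<^sub>R d \<in> K"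
  using assms unfolding dil_def by auto

lemma ball_subset_of_transl_subset_dil:
  fixes C K :: "'a::real_normed_vector set"
  assumes "ball 0 \<rho> \<subseteq> C" "transl C x \<subseteq> dil d K" "0 < d"
  shows "ball (x /\<^sub>R d) (\<rho> / d) \<subseteq> K"
proof
  fix z assume "z \<in> ball (x /\<^sub>R d) (\<rho> / d)"
  then have "norm (z - x /\<^sub>R d) < \<rho> / d"
    by (simp add: dist_norm norm_minus_commute)
  moreover have "d *\<^sub>R z - x = d *\<^sub>R (z - x /\<^sub>R d)"
    using \<open>0 < d\<close> by (simp add: algebra_simps)
  ultimately have "norm (d *\<^sub>R z - x) < \<rho>"
    using \<open>0 < d\<close> by (simp add: pos_less_divide_eq mult.commute)
  then have "d *\<^sub>R z - x \<in> C"
    using assms(1) by auto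
  then have "d *\<^sub>R z \<in> transl C x"
    unfolding transl_def by (metis diff_add_cancel image_eqI)
  then have "(d *\<^sub>R z) /\<^sub>R d \<in> K"
    using assms(2,3) mem_dil_divide[of "d *\<^sub>R z" d K] by auto
  then show "z \<in> K"
    using \<open>0 < d\<close> by simp
qed

lemma zero_in_closure_if_shrink_invariant:
  fixes K :: "'a::real_normed_vector set"
  assumes "1 < d" "k \<in> K" and shrink: "\<And>z. z \<in> K \<Longrightarrow> z /\<^sub>R d \<in> K"
  shows "0 \<in> closure K"
proof -
  have "k /\<^sub>R d ^ n \<in> K" for n
  proof (induction n)
    case (Suc n)
    then have "(k /\<^sub>R d ^ n) /\<^sub>R d \<in> K"
      by (rule shrink)
    then show ?case
      by (simp add: mult.commute)
  qed (use \<open>k \<in> K\<close> in simp)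
  moreover have "(\<lambda>n. k /\<^sub>R d ^ n) \<longlonglongrightarrow> 0"
    using tendsto_scaleR[OF LIMSEQ_inverse_realpow_zero[OF \<open>1 < d\<close>] tendsto_const[of k]]
    by simp
  ultimately show ?thesis
    unfolding closure_sequential by (intro exI[of _ "\<lambda>n. k /\<^sub>R d ^ n"]) simp
qed

text \<open>The identity behind this lemma is
  \<open>(1 - \<delta>) m + \<delta> (p + e) = (1 + \<mu>)(1 - \<delta>) m + \<delta> x\<close> for \<open>p = x/(1 + \<mu>)\<close> and
  \<open>e = \<mu> ((1 - \<delta>)/\<delta> m + p)\<close>, and \<open>e\<close> is small.\<close>

lemma convex_combination_with_offset_mem:
  fixes K :: "'a::real_normed_vector set"
  assumes "convex K" "m \<in> K" "ball (x /\<^sub>R (1 + \<mu>)) \<rho> \<subseteq> K"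
    and "0 < \<delta>" "\<delta> < 1" "0 \<le> \<mu>"
    and "norm m \<le> M" "norm x \<le> M" "\<mu> * (1 / \<delta> + 1) * M < \<rho>"
  shows "((1 + \<mu>) * (1 - \<delta>)) *\<^sub>R m + \<delta> *\<^sub>R x \<in> K"
proof -
  define p where "p = x /\<^sub>R (1 + \<mu>)"
  define e where "e = (\<mu> * (1 - \<delta>) / \<delta>) *\<^sub>R m + \<mu> *\<^sub>R p"
  have "norm e \<le> norm ((\<mu> * (1 - \<delta>) / \<delta>) *\<^sub>R m) + norm (\<mu> *\<^sub>R p)"
    unfolding e_def by (rule norm_triangle_ineq)
  also have "\<dots> = \<mu> * (1 - \<delta>) / \<delta> * norm m + \<mu> * norm p"
    using assms(4-6) by simp
  also have "\<dots> \<le> \<mu> / \<delta> * M + \<mu> * M"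
  proof (rule add_mono)
    have "\<mu> * (1 - \<delta>) / \<delta> \<le> \<mu> / \<delta>"
      using assms(4-6) by (simp add: divide_right_mono mult_left_le)
    then show "\<mu> * (1 - \<delta>) / \<delta> * norm m \<le> \<mu> / \<delta> * M"
      using assms(4,6,7) by (intro mult_mono) auto
    have "norm p \<le> norm x"
      unfolding p_def using assms(6) by (simp add: mult_left_le_one_le inverse_le_1_iff)
    then show "\<mu> * norm p \<le> \<mu> * M"
      using assms(6,8) by (intro mult_left_mono) auto
  qed
  also have "\<dots> < \<rho>"
    using assms(9) by (simp add: algebra_simps)
  finally have "p + e \<in> K"
    using assms(3) unfolding p_def by (auto simp: dist_norm)
  then have "(1 - \<delta>) *\<^sub>R m + \<delta> *\<^sub>R (p + e) \<in> K"
    using convexD[OF assms(1,2), of "p + e" "1 - \<delta>" \<delta>] assms(4,5) by simp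
  moreover have "(1 - \<delta>) *\<^sub>R m + \<delta> *\<^sub>R (p + e) = ((1 + \<mu>) * (1 - \<delta>)) *\<^sub>R m + \<delta> *\<^sub>R x"
  proof -
    have "\<delta> * (\<mu> * (1 - \<delta>) / \<delta>) = \<mu> * (1 - \<delta>)"
      using assms(4) by simp
    then have e: "\<delta> *\<^sub>R e = (\<mu> * (1 - \<delta>)) *\<^sub>R m + (\<delta> * \<mu>) *\<^sub>R p"
      unfolding e_def scaleR_add_right scaleR_scaleR by simp
    have "(1 - \<delta>) *\<^sub>R m + \<delta> *\<^sub>R (p + e)
        = (1 - \<delta>) *\<^sub>R m + \<delta> *\<^sub>R p + ((\<mu> * (1 - \<delta>)) *\<^sub>R m + (\<delta> * \<mu>) *\<^sub>R p)"
      by (simp add: scaleR_add_right e add.assoc)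
    also have "\<dots> = ((1 + \<mu>) * (1 - \<delta>)) *\<^sub>R m + (\<delta> * (1 + \<mu>)) *\<^sub>R p"
      by (simp add: algebra_simps)
    also have "(\<delta> * (1 + \<mu>)) *\<^sub>R p = \<delta> *\<^sub>R x"
      unfolding p_def using assms(6) by simp
    finally show ?thesis .
  qed
  ultimately show ?thesis
    by simp
qed

lemma msum_dil_subset_of_absorbing:
  assumes "convex K" "K \<subseteq> transl A x" "K \<subseteq> transl B y"
    and "transl CA x \<subseteq> dil d K" "transl CB y \<subseteq> dil d K" "0 < d"
    and "0 \<le> \<delta>" "\<delta> \<le> t" "t < 1"
    and absorb: "\<And>m. m \<in> K \<Longrightarrow> (d * (1 - \<delta>)) *\<^sub>R m + \<delta> *\<^sub>R x \<in> K"
  shows "msum (dil (t - \<delta>) CA) (dil (1 - t) CB) \<subseteq> msum (dil t A) (dil (1 - t) B)"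
proof
  fix w assume "w \<in> msum (dil (t - \<delta>) CA) (dil (1 - t) CB)"
  then obtain a b where "a \<in> CA" "b \<in> CB" and w: "w = (t - \<delta>) *\<^sub>R a + (1 - t) *\<^sub>R b"
    unfolding msum_def dil_def by auto
  define u where "u = (a + x) /\<^sub>R d"
  define v where "v = (b + y) /\<^sub>R d"
  have "u \<in> K" "v \<in> K"
    unfolding u_def v_def using \<open>a \<in> CA\<close> \<open>b \<in> CB\<close> assms(4-6)
    by (auto simp: transl_def intro!: mem_dil_divide)
  define m where "m = ((t - \<delta>) / (1 - \<delta>)) *\<^sub>R u + ((1 - t) / (1 - \<delta>)) *\<^sub>R v"
  have "m \<in> K"
    unfolding m_def using assms(7-9)
    by (intro convexD[OF assms(1) \<open>u \<in> K\<close> \<open>v \<in> K\<close>]) (auto simp: field_simps)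
  define k where "k = (d * (1 - \<delta>)) *\<^sub>R m + \<delta> *\<^sub>R x"
  have "k \<in> K"
    unfolding k_def using \<open>m \<in> K\<close> by (rule absorb)
  have "(1 - \<delta>) *\<^sub>R m = (t - \<delta>) *\<^sub>R u + (1 - t) *\<^sub>R v"
    unfolding m_def using assms(8,9) by (simp add: scaleR_add_right)
  moreover have "d *\<^sub>R u = a + x" "d *\<^sub>R v = b + y"
    unfolding u_def v_def using assms(6) by simp_all
  ultimately have "(d * (1 - \<delta>)) *\<^sub>R m = (t - \<delta>) *\<^sub>R (a + x) + (1 - t) *\<^sub>R (b + y)"
    by (metis scaleR_add_right scaleR_left_commute scaleR_scaleR)
  then have "w = t *\<^sub>R (k - x) + (1 - t) *\<^sub>R (k - y)"
    unfolding w k_def by (simp add: algebra_simps)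
  moreover have "k - x \<in> A" "k - y \<in> B"
    using \<open>k \<in> K\<close> assms(2,3) unfolding transl_def by auto
  ultimately show "w \<in> msum (dil t A) (dil (1 - t) B)"
    unfolding msum_def dil_def by blast
qed

lemma small_mu_offset_bound:
  fixes l \<mu> \<delta> :: real
  assumes "1 \<le> l" "0 < \<delta>" "\<delta> < 1" "0 < \<mu>" "\<mu> \<le> \<delta> / (12 * l^2)"
  shows "\<mu> * (1 / \<delta> + 1) * (2 * l) < 1 / l / (1 + \<mu>)"
proof -
  have "\<mu> * (1 / \<delta> + 1) \<le> \<delta> / (12 * l^2) * (1 / \<delta> + 1)"
    using assms by (intro mult_right_mono) auto
  also have "\<dots> = (1 + \<delta>) / (12 * l^2)"
    using assms by (simp add: field_simps)
  finally have "\<mu> * (1 / \<delta> + 1) * (2 * l) \<le> (1 + \<delta>) / (12 * l^2) * (2 * l)"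
    using assms by (intro mult_right_mono) auto
  also have "\<dots> = (1 + \<delta>) / (6 * l)"
    using assms by (simp add: field_simps power2_eq_square)
  also have "\<dots> < 1 / (2 * l)"
    using assms(1,3) by (simp add: field_simps)
  also have "\<dots> \<le> 1 / l / (1 + \<mu>)"
  proof -
    have "1 \<le> 12 * l^2"
      using assms(1) one_le_power[of l 2] by linarith
    then have "\<delta> / (12 * l^2) \<le> \<delta>"
      using assms(2) by (simp add: divide_le_eq)
    then have "l * (1 + \<mu>) \<le> 2 * l"
      using assms(1,3,5) by (simp add: algebra_simps)
    then show ?thesis
      using assms(1,4) by (simp add: divide_left_mono)
  qed
  finally show ?thesis .
qed

lemma msum_dil_subset_of_sandwich:
  fixes K A B CA CB :: "'a::real_normed_vector set"
  assumes "convex K" "K \<subseteq> transl A x" "K \<subseteq> transl B y"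
    and "K \<subseteq> transl CA x" "transl CA x \<subseteq> dil (1 + \<mu>) K" "transl CB y \<subseteq> dil (1 + \<mu>) K"
    and "ball 0 (1 / l) \<subseteq> CA" "CA \<subseteq> ball 0 l" "1 \<le> l"
    and "0 < \<delta>" "\<delta> \<le> t" "t < 1" "0 < \<mu>" "\<mu> \<le> \<delta> / (12 * l^2)"
  shows "msum (dil (t - \<delta>) CA) (dil (1 - t) CB) \<subseteq> msum (dil t A) (dil (1 - t) B)"
proof (rule msum_dil_subset_of_absorbing[OF assms(1-3,5,6)])
  have "0 < l"
    using assms(9) by simp
  have inner_ball: "ball (x /\<^sub>R (1 + \<mu>)) (1 / l / (1 + \<mu>)) \<subseteq> K"
    using ball_subset_of_transl_subset_dil[OF assms(7,5)] assms(13) by simp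
  have K_ball: "K \<subseteq> ball x l"
    using assms(4,8) by (force simp: transl_def dist_norm)
  txt \<open>\<open>K \<subseteq> C\<^sub>A + x \<subseteq> (1 + \<mu>) K\<close> makes \<open>K\<close> invariant under shrinking towards \<open>0\<close>; this bounds \<open>x\<close>.\<close>
  have "0 \<in> closure K"
  proof (rule zero_in_closure_if_shrink_invariant)
    show "x /\<^sub>R (1 + \<mu>) \<in> K"
      using inner_ball \<open>0 < l\<close> assms(13) by auto
    show "z /\<^sub>R (1 + \<mu>) \<in> K" if "z \<in> K" for z
      using that assms(4,5,13) mem_dil_divide[of z "1 + \<mu>" K] by auto
  qed (use assms(13) in simp)
  then have "0 \<in> cball x l"
    using closure_mono[OF K_ball] \<open>0 < l\<close> by auto
  then have norm_x: "norm x \<le> l"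
    by simp
  show "((1 + \<mu>) * (1 - \<delta>)) *\<^sub>R m + \<delta> *\<^sub>R x \<in> K" if "m \<in> K" for m
  proof (rule convex_combination_with_offset_mem[OF assms(1) that inner_ball])
    show "norm m \<le> 2 * l"
      using K_ball that norm_x norm_triangle_sub[of m x] by (force simp: dist_norm norm_minus_commute)
    show "\<mu> * (1 / \<delta> + 1) * (2 * l) < 1 / l / (1 + \<mu>)"
      using small_mu_offset_bound[OF assms(9,10) _ assms(13,14)] assms(11,12) by linarith
  qed (use assms(10-13) norm_x \<open>0 < l\<close> in auto)
qed (use assms(10-13) in auto)

theorem mainTheorem14:
  fixes t \<epsilon> l :: real
  assumes "0 < t" "t < 1" "0 < \<epsilon>" "\<epsilon> < 1" "1 \<le> l"
  shows "\<exists>\<mu>>0. \<forall>\<gamma> lam (A::'a::euclidean_space set) B CA CB.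
           0 \<le> \<gamma> \<longrightarrow> 1 \<le> lam \<longrightarrow> conelike_with \<gamma> l lam \<mu> A B CA CB \<longrightarrow>
           msum (dil (t * (1 - \<epsilon> / 4)) CA) (dil (1 - t) CB)
             \<subseteq> msum (dil t A) (dil (1 - t) B)"
proof (intro exI conjI allI impI)
  define \<delta> where "\<delta> = t * \<epsilon> / 4"
  have "t * (\<epsilon> / 4) \<le> t * 1"
    using assms(1,4) by (intro mult_left_mono) auto
  then have "0 < \<delta>" "\<delta> \<le> t" "t * (1 - \<epsilon> / 4) = t - \<delta>"
    using assms(1,3) unfolding \<delta>_def by (simp_all add: algebra_simps)
  then show "0 < \<delta> / (12 * l^2)"
    using assms(5) by simp
  fix \<gamma> lam and A B CA CB :: "'a set"
  assume "conelike_with \<gamma> l lam (\<delta> / (12 * l^2)) A B CA CB"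
  then obtain K x y where "convex K" and "ball 0 (1 / l) \<subseteq> CA" "CA \<subseteq> ball 0 l"
    and sandwich: "\<forall>X\<in>{transl A x, transl CA x, transl B y, transl CB y}.
          K \<subseteq> X \<and> X \<subseteq> dil (1 + \<delta> / (12 * l^2)) K"
    unfolding conelike_with_def by (elim conjE exE)
  show "msum (dil (t * (1 - \<epsilon> / 4)) CA) (dil (1 - t) CB) \<subseteq> msum (dil t A) (dil (1 - t) B)"
    unfolding \<open>t * (1 - \<epsilon> / 4) = t - \<delta>\<close>
  proof (rule msum_dil_subset_of_sandwich[OF \<open>convex K\<close> _ _ _ _ _
        \<open>ball 0 (1 / l) \<subseteq> CA\<close> \<open>CA \<subseteq> ball 0 l\<close> assms(5) \<open>0 < \<delta>\<close> \<open>\<delta> \<le> t\<close> assms(2)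
        \<open>0 < \<delta> / (12 * l^2)\<close> order_refl])
  qed (use sandwich in blast)+
qed

end
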